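(* Let $S,T$ be numberings of shape $\lambda\vdash n$, let $1\le i\le\ell(\lambda)-1$ and $1\le j\le\lambda_{i+1}$. Then \[ v_S^T=(-1)^j\sum_{U\in\Xi_{i,j}(S)}v_U^T . \]
   Context: Permutations in $\mathfrak S_n$ act on $[n]$, products are compositions $(\sigma\tau)(k)=\sigma(\tau(k))$. A numbering of shape $\lambda\vdash n$ is a filling of the Young diagram of $\lambda$ (rows indexed top to bottom; $\ell(\lambda)$ = number of rows) with $1,\dots,n$, each exactly once. For $\pi\in\mathfrak S_n$, $\pi\cdot T$ replaces each entry $k$ by $\pi(k)$; $\sigma_{T,S}$ is the unique permutation with $\sigma_{T,S}\cdot T=S$. $R(T)$, $C(T)$ are the row and column groups; $a_T=\sum_{\rho\in R(T)}\rho$, $b_T=\sum_{\zeta\in C(T)}\operatorname{sgn}(\zeta)\zeta$, and $v_S^T=\sigma_{S,T}\,b_S\,a_S\in\mathbb C[\mathfrak S_n]$. Let $J$ be the set of the first (leftmost) $j$ entries of row $i+1$ of $S$. The set $\Xi_{i,j}(S)$ consists of the numberings obtained from $S$, one for each $j$-element subset $B$ of the entries of row $i$ of $S$, by moving the entries of $J$ to the positions in row $i$ previously occupied by $B$ and the entries of $B$ to the positions in row $i+1$ previously occupied by $J$, preserving relative left-to-right order within each subset. *)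

theory Defs
  imports Complex_Main "HOL-Combinatorics.Permutations"
begin

(* Partitions: list of positive parts in weakly decreasing order, summing to n.
   lam ! (r-1) is the length of row r (rows indexed 1,...,length lam). *)
definition is_partition :: "nat list \<Rightarrow> nat \<Rightarrow> bool" where
  "is_partition lam n \<longleftrightarrow> sorted (rev lam) \<and> (\<forall>x\<in>set lam. 0 < x) \<and> sum_list lam = n"

definition cells :: "nat list \<Rightarrow> (nat \<times> nat) set" where
  "cells lam = {(r, c). 1 \<le> r \<and> r \<le> length lam \<and> 1 \<le> c \<and> c \<le> lam ! (r - 1)}"

type_synonym numbering = "nat \<times> nat \<Rightarrow> nat"

definition is_numbering :: "nat \<Rightarrow> nat list \<Rightarrow> numbering \<Rightarrow> bool" where
  "is_numbering n lam T \<longleftrightarrow> bij_betw T (cells lam) {1..n}"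

definition sigma_TS :: "nat \<Rightarrow> nat list \<Rightarrow> numbering \<Rightarrow> numbering \<Rightarrow> (nat \<Rightarrow> nat)" where
  "sigma_TS n lam T S = (THE p. p permutes {1..n} \<and> (\<forall>x\<in>cells lam. p (T x) = S x))"

definition row_group :: "nat \<Rightarrow> nat list \<Rightarrow> numbering \<Rightarrow> (nat \<Rightarrow> nat) set" where
  "row_group n lam T = {p. p permutes {1..n} \<and>
     (\<forall>x\<in>cells lam. \<exists>y\<in>cells lam. fst y = fst x \<and> T y = p (T x))}"

definition col_group :: "nat \<Rightarrow> nat list \<Rightarrow> numbering \<Rightarrow> (nat \<Rightarrow> nat) set" where
  "col_group n lam T = {p. p permutes {1..n} \<and>
     (\<forall>x\<in>cells lam. \<exists>y\<in>cells lam. snd y = snd x \<and> T y = p (T x))}"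

(* Group algebra C[S_n]: an element is a coefficient function on permutations of {1..n}
   (coefficients of non-permutations are irrelevant / zero). Product: (p q)(k) = p (q k). *)
type_synonym galg = "(nat \<Rightarrow> nat) \<Rightarrow> complex"

definition gmult :: "nat \<Rightarrow> galg \<Rightarrow> galg \<Rightarrow> galg" where
  "gmult n f g = (\<lambda>p. if p permutes {1..n}
      then (\<Sum>q\<in>{q. q permutes {1..n}}. f q * g (inv q \<circ> p)) else 0)"

definition gbasis :: "nat \<Rightarrow> (nat \<Rightarrow> nat) \<Rightarrow> galg" where
  "gbasis n p = (\<lambda>q. if q = p \<and> p permutes {1..n} then 1 else 0)"

definition a_elt :: "nat \<Rightarrow> nat list \<Rightarrow> numbering \<Rightarrow> galg" where
  "a_elt n lam T = (\<lambda>p. if p \<in> row_group n lam T then 1 else 0)"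

definition b_elt :: "nat \<Rightarrow> nat list \<Rightarrow> numbering \<Rightarrow> galg" where
  "b_elt n lam T = (\<lambda>p. if p \<in> col_group n lam T then of_int (sign p) else 0)"

definition v_elt :: "nat \<Rightarrow> nat list \<Rightarrow> numbering \<Rightarrow> numbering \<Rightarrow> galg" where
  "v_elt n lam S T = gmult n (gmult n (gbasis n (sigma_TS n lam S T)) (b_elt n lam S)) (a_elt n lam S)"

(* The numbering obtained from S by exchanging the entries at the positions
   C (a set of j columns of row i) with the entries in columns 1..j of row i+1,
   order preserving: the k-th leftmost position of C gets S(i+1,k), and
   position (i+1,k) gets the entry of the k-th leftmost position of C. *)
definition swap_numbering :: "nat \<Rightarrow> nat \<Rightarrow> nat set \<Rightarrow> numbering \<Rightarrow> numbering" where
  "swap_numbering i j C S = (\<lambda>(r, c).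
     if r = i \<and> c \<in> C then
       S (i + 1, Suc (length (filter (\<lambda>d. d < c) (sorted_list_of_set C))))
     else if r = i + 1 \<and> 1 \<le> c \<and> c \<le> j then
       S (i, sorted_list_of_set C ! (c - 1))
     else S (r, c))"

(* Xi_{i,j}(S): one numbering for each j-element subset B of the entries of row i,
   B being described by its set of column positions C. *)
definition Xi :: "nat list \<Rightarrow> nat \<Rightarrow> nat \<Rightarrow> numbering \<Rightarrow> numbering set" where
  "Xi lam i j S = (\<lambda>C. swap_numbering i j C S) `
      {C. C \<subseteq> {1..lam ! (i - 1)} \<and> card C = j}"

end

theory Submission
  imports Defs
begin

text \<open>
  Write \<open>A\<close> (\<open>upper_row\<close>) for the entries of row \<open>i\<close> of \<open>S\<close> and \<open>J\<close> (\<open>lower_block\<close>) for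
  the first \<open>j\<close> entries of row \<open>i+1\<close>. The coefficient \<open>v\<^sub>S\<^sup>T(q)\<close> is a signed count of the
  factorisations \<open>q = \<sigma>\<^sub>S\<^sub>,\<^sub>T z r\<close> with \<open>z\<close> in the column group and \<open>r\<close> in the row group of \<open>S\<close>.
  Hence it is unchanged by \<open>q \<mapsto> q k\<close> for row permutations \<open>k\<close>, and relabelling \<open>S\<close> by a
  permutation \<open>w\<close> turns \<open>v\<^bsub>wS\<^esub>\<^sup>T(p)\<close> into \<open>v\<^sub>S\<^sup>T(p w)\<close>.

  Let \<open>J' \<subseteq> J\<close> be nonempty. Row \<open>i+1\<close> is not longer than row \<open>i\<close>, so every row permutation
  \<open>r\<close> puts some entry of \<open>A\<close> and some entry of \<open>J'\<close> into a common column; composing with the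
  transposition of these two entries is a sign-reversing involution, and therefore
  \<open>\<Sum>\<^bsub>w \<in> Sym(A \<union> J')\<^esub> v\<^sub>S\<^sup>T(p w) = 0\<close>. By row invariance the summand only depends on
  \<open>w(A) = (A - B) \<union> K\<close> with \<open>K \<subseteq> J'\<close> and \<open>|B| = |K|\<close>, each such set arising equally often; so
  \<open>\<Sum>\<^bsub>K \<subseteq> J'\<^esub> F(K) = 0\<close>, where \<open>F(K)\<close> (\<open>exchange_sum\<close>) adds up the values at all sets
  \<open>(A - B) \<union> K\<close>. Moebius inversion over the subsets of \<open>J\<close> yields
  \<open>F(J) = (-1)\<^sup>j F({}) = (-1)\<^sup>j v\<^sub>S\<^sup>T(p)\<close>, and \<open>F(J)\<close> is precisely the sum over \<open>\<Xi>\<^sub>i\<^sub>,\<^sub>j(S)\<close>.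
\<close>

lemma filter_less_nth_eq_take:
  fixes xs :: "'a::linorder list"
  assumes "sorted_wrt (<) xs" and "k < length xs"
  shows "filter (\<lambda>d. d < xs ! k) xs = take k xs"
  using assms
proof (induction xs arbitrary: k)
  case (Cons a xs)
  show ?case
  proof (cases k)
    case 0
    with Cons.prems show ?thesis by (auto simp: filter_empty_conv)
  next
    case (Suc m)
    with Cons.prems have "a < xs ! m" by (auto simp: nth_mem)
    with Cons Suc show ?thesis by auto
  qed
qed simp

text \<open>Ranks and positions in a finite set are counted from 1, like rows and columns.\<close>

definition set_rank :: "'a::linorder set \<Rightarrow> 'a \<Rightarrow> nat" where
  "set_rank C c = Suc (length (filter (\<lambda>d. d < c) (sorted_list_of_set C)))"

definition set_nth :: "'a::linorder set \<Rightarrow> nat \<Rightarrow> 'a" where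
  "set_nth C k = sorted_list_of_set C ! (k - 1)"

lemma set_nth_in:
  assumes "finite C" and "k \<in> {1..card C}"
  shows "set_nth C k \<in> C"
proof -
  have "k - 1 < length (sorted_list_of_set C)" using assms by auto
  then show ?thesis using assms(1) unfolding set_nth_def by (metis nth_mem set_sorted_list_of_set)
qed

lemma set_rank_set_nth:
  assumes "finite C" and "k \<in> {1..card C}"
  shows "set_rank C (set_nth C k) = k"
  using assms by (auto simp: set_rank_def set_nth_def filter_less_nth_eq_take)

lemma set_rank_in:
  assumes "finite C" and "c \<in> C"
  shows "set_rank C c \<in> {1..card C}"
proof -
  have "length (filter (\<lambda>d. d < c) (sorted_list_of_set C)) < length (sorted_list_of_set C)"
    using assms by (intro length_filter_less) auto
  with assms show ?thesis by (simp add: set_rank_def)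
qed

lemma set_nth_set_rank:
  assumes "finite C" and "c \<in> C"
  shows "set_nth C (set_rank C c) = c"
proof -
  obtain k where "k < card C" and "sorted_list_of_set C ! k = c"
    using assms by (metis in_set_conv_nth length_sorted_list_of_set set_sorted_list_of_set)
  with assms set_rank_set_nth[of C "Suc k"] show ?thesis by (simp add: set_nth_def)
qed

lemma bij_betw_image_subsets_of_card:
  assumes "bij_betw f X Y"
  shows "bij_betw (image f) {B. B \<subseteq> X \<and> card B = k} {B. B \<subseteq> Y \<and> card B = k}"
proof (rule bij_betw_imageI)
  have Pow: "bij_betw (image f) (Pow X) (Pow Y)" using assms by (rule bij_betw_image_Pow)
  have card_eq: "card (f ` B) = card B" if "B \<subseteq> X" for B
    using that bij_betw_imp_inj_on[OF assms] by (meson card_image inj_on_subset)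
  show "inj_on (image f) {B. B \<subseteq> X \<and> card B = k}"
    by (rule inj_on_subset[OF bij_betw_imp_inj_on[OF Pow]]) blast
  show "image f ` {B. B \<subseteq> X \<and> card B = k} = {B. B \<subseteq> Y \<and> card B = k}"
  proof (intro equalityI subsetI)
    fix B' assume "B' \<in> image f ` {B. B \<subseteq> X \<and> card B = k}"
    then obtain B where "B \<subseteq> X" "card B = k" "B' = f ` B" by blast
    moreover have "f ` X = Y" using assms by (rule bij_betw_imp_surj_on)
    ultimately show "B' \<in> {B. B \<subseteq> Y \<and> card B = k}"
      using card_eq by blast
  next
    fix B' assume B': "B' \<in> {B. B \<subseteq> Y \<and> card B = k}"
    then have "B' \<in> image f ` Pow X" using bij_betw_imp_surj_on[OF Pow] by simp
    then obtain B where "B \<subseteq> X" "B' = f ` B" by blast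
    then show "B' \<in> image f ` {B. B \<subseteq> X \<and> card B = k}"
      using card_eq B' by (intro image_eqI[of _ _ B]) auto
  qed
qed

lemma sum_Pow_vanishing_imp_alternating:
  fixes F :: "'a set \<Rightarrow> 'b::ring_1"
  assumes "finite J" and vanish: "\<And>J'. J' \<subseteq> J \<Longrightarrow> J' \<noteq> {} \<Longrightarrow> sum F (Pow J') = 0"
  shows "F J = (-1) ^ card J * F {}"
proof -
  have "F J = (\<Sum>T\<in>Pow J. (-1) ^ (card J - card T) * sum F (Pow T))"
    by (rule inclusion_exclusion_mobius) (use \<open>finite J\<close> in auto)
  also have "\<dots> = (\<Sum>T\<in>Pow J. if T = {} then (-1) ^ card J * F {} else 0)"
    by (rule sum.cong) (auto simp: vanish)
  also have "\<dots> = (-1) ^ card J * F {}"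
    using \<open>finite J\<close> by (simp add: sum.delta')
  finally show ?thesis .
qed

lemma permutes_exchange_exists:
  assumes "finite B" and "finite K" and "B \<inter> K = {}" and "card B = card K"
  shows "\<exists>w. w permutes (B \<union> K) \<and> w ` B = K"
  using assms
proof (induction B arbitrary: K rule: finite_induct)
  case empty
  then show ?case by (auto intro: permutes_id)
next
  case (insert b B K)
  then obtain k where k: "k \<in> K" by fastforce
  with insert have "finite (K - {k})" "B \<inter> (K - {k}) = {}" "card B = card (K - {k})"
    by auto
  with insert.IH obtain w where w: "w permutes (B \<union> (K - {k}))" "w ` B = K - {k}"
    by blast
  have "b \<notin> B \<union> K" using insert by blast
  then have wb: "w b = b" using w(1) by (auto intro: permutes_not_in)
  have "transpose b k ` (K - {k}) = K - {k}"
    using \<open>b \<notin> B \<union> K\<close> by (auto simp: transpose_def image_iff)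
  have "(transpose b k \<circ> w) ` insert b B = insert (transpose b k (w b)) (transpose b k ` w ` B)"
    by (simp only: image_insert image_comp comp_apply)
  also have "\<dots> = insert k (K - {k})"
    using wb w(2) \<open>transpose b k ` (K - {k}) = K - {k}\<close> by simp
  also have "\<dots> = K" using k by blast
  finally have "(transpose b k \<circ> w) ` insert b B = K" .
  moreover have "transpose b k \<circ> w permutes (insert b B \<union> K)"
    using w(1) k by (intro permutes_compose permutes_swap_id) (auto elim: permutes_subset)
  ultimately show ?case by blast
qed

lemma sign_conjugate:
  assumes "permutation w" and "permutation z"
  shows "sign (w \<circ> z \<circ> inv w) = sign z"
  using assms by (simp add: sign_compose permutation_compose permutation_inverse sign_inverse)

lemma comp_permutes_cancel_right:
  assumes "k permutes N"
  shows "f \<circ> k = g \<circ> k \<longleftrightarrow> f = g"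
  using permutes_inv_o(1)[OF assms] by (metis comp_assoc comp_id)

lemma comp_inv_eq_iff:
  assumes "w permutes N"
  shows "f \<circ> inv w = g \<longleftrightarrow> f = g \<circ> w"
proof
  assume "f \<circ> inv w = g"
  then show "f = g \<circ> w" using permutes_inv_o(2)[OF assms] by (metis comp_assoc comp_id)
next
  assume "f = g \<circ> w"
  then show "f \<circ> inv w = g" using permutes_inv_o(1)[OF assms] by (metis comp_assoc comp_id)
qed

definition fiber_preserving_perms :: "'a set \<Rightarrow> ('a \<Rightarrow> 'b) \<Rightarrow> ('a \<Rightarrow> 'a) set" where
  "fiber_preserving_perms N f = {p. p permutes N \<and> (\<forall>k\<in>N. f (p k) = f k)}"

lemma fiber_preserving_perms_permutes:
  "p \<in> fiber_preserving_perms N f \<Longrightarrow> p permutes N"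
  by (simp add: fiber_preserving_perms_def)

lemma fiber_preserving_perms_compose:
  assumes "p \<in> fiber_preserving_perms N f" and "q \<in> fiber_preserving_perms N f"
  shows "p \<circ> q \<in> fiber_preserving_perms N f"
  using assms permutes_in_image[of q N]
  by (auto simp: fiber_preserving_perms_def permutes_compose)

lemma fiber_preserving_perms_inv:
  assumes "p \<in> fiber_preserving_perms N f"
  shows "inv p \<in> fiber_preserving_perms N f"
proof -
  have p: "p permutes N" using assms by (rule fiber_preserving_perms_permutes)
  have "f (inv p k) = f k" if "k \<in> N" for k
    using assms that permutes_in_image[OF permutes_inv[OF p]]
    by (auto simp: fiber_preserving_perms_def permutes_inverses(1)[OF p] dest!: bspec[of _ _ "inv p k"])
  with p show ?thesis by (simp add: fiber_preserving_perms_def permutes_inv)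
qed

lemma transpose_in_fiber_preserving_perms:
  assumes "a \<in> N" and "b \<in> N" and "f a = f b"
  shows "transpose a b \<in> fiber_preserving_perms N f"
  using assms by (auto simp: fiber_preserving_perms_def permutes_swap_id transpose_def)

lemma sum_fiber_preserving_perms_compose_right:
  assumes q: "q \<in> fiber_preserving_perms N f"
  shows "sum g (fiber_preserving_perms N f) = (\<Sum>p\<in>fiber_preserving_perms N f. g (p \<circ> q))"
proof (rule sum.reindex_bij_witness[where i="\<lambda>p. p \<circ> q" and j="\<lambda>p. p \<circ> inv q"])
  have q_inv: "q \<circ> inv q = id" "inv q \<circ> q = id"
    using fiber_preserving_perms_permutes[OF q] by (simp_all add: permutes_inv_o)
  fix p assume p: "p \<in> fiber_preserving_perms N f"
  show "p \<circ> inv q \<circ> q = p" "p \<circ> q \<circ> inv q = p"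
    by (simp_all add: comp_assoc q_inv)
  show "p \<circ> inv q \<in> fiber_preserving_perms N f" "p \<circ> q \<in> fiber_preserving_perms N f"
    using p q by (simp_all add: fiber_preserving_perms_compose fiber_preserving_perms_inv)
  show "g (p \<circ> inv q \<circ> q) = g p"
    by (simp add: comp_assoc q_inv)
qed

lemma fiber_preserving_perms_conjugate:
  assumes w: "w permutes N" and f': "\<And>k. k \<in> N \<Longrightarrow> f' k = f (inv w k)"
  shows "fiber_preserving_perms N f' = (\<lambda>g. w \<circ> g \<circ> inv w) ` fiber_preserving_perms N f"
proof (intro equalityI subsetI)
  have w_in: "w k \<in> N" "inv w k \<in> N" if "k \<in> N" for k
    using that permutes_in_image[OF w] permutes_in_image[OF permutes_inv[OF w]] by auto
  have w_inv: "w (inv w k) = k" "inv w (w k) = k" for k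
    using permutes_inverses[OF w] by simp_all
  fix g' assume g': "g' \<in> fiber_preserving_perms N f'"
  have g'_perm: "g' permutes N" using g' by (rule fiber_preserving_perms_permutes)
  define g where "g = inv w \<circ> g' \<circ> w"
  have "g permutes N" unfolding g_def using g'_perm w by (intro permutes_compose permutes_inv)
  moreover have "f (g k) = f k" if "k \<in> N" for k
  proof -
    have "f (g k) = f' (g' (w k))"
      using that w_in permutes_in_image[OF g'_perm] by (simp add: g_def f')
    also have "\<dots> = f' (w k)" using g' w_in that by (simp add: fiber_preserving_perms_def)
    also have "\<dots> = f k" using that w_in by (simp add: f' w_inv)
    finally show ?thesis .
  qed
  moreover have "g' = w \<circ> g \<circ> inv w" by (simp add: g_def fun_eq_iff w_inv)
  ultimately show "g' \<in> (\<lambda>g. w \<circ> g \<circ> inv w) ` fiber_preserving_perms N f"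
    by (auto simp: fiber_preserving_perms_def)
next
  have w_in: "inv w k \<in> N" if "k \<in> N" for k
    using that permutes_in_image[OF permutes_inv[OF w]] by auto
  fix g' assume "g' \<in> (\<lambda>g. w \<circ> g \<circ> inv w) ` fiber_preserving_perms N f"
  then obtain g where g: "g \<in> fiber_preserving_perms N f" and g': "g' = w \<circ> g \<circ> inv w" by blast
  have g_perm: "g permutes N" using g by (rule fiber_preserving_perms_permutes)
  have "g' permutes N" unfolding g' using g_perm w by (intro permutes_compose permutes_inv)
  moreover have "f' (g' k) = f' k" if "k \<in> N" for k
    using that g w_in permutes_in_image[OF g_perm] permutes_in_image[OF w]
    by (simp add: g' f' permutes_inverses[OF w] fiber_preserving_perms_def)
  ultimately show "g' \<in> fiber_preserving_perms N f'" by (simp add: fiber_preserving_perms_def)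
qed

section \<open>Images of a set under the permutations of a larger set\<close>

lemma card_permutes_image_fiber:
  assumes w0: "w0 permutes X"
  shows "card {w. w permutes X \<and> w ` A = w0 ` A} = card {w. w permutes X \<and> w ` A = A}"
proof -
  have "bij_betw ((\<circ>) w0) {w. w permutes X \<and> w ` A = A} {w. w permutes X \<and> w ` A = w0 ` A}"
  proof (rule bij_betw_byWitness[where f'="(\<circ>) (inv w0)"])
    have inj: "inj w0" using w0 by (rule permutes_inj)
    show "\<forall>w\<in>{w. w permutes X \<and> w ` A = A}. inv w0 \<circ> (w0 \<circ> w) = w"
      "\<forall>w\<in>{w. w permutes X \<and> w ` A = w0 ` A}. w0 \<circ> (inv w0 \<circ> w) = w"
      using w0 by (simp_all add: comp_assoc[symmetric] permutes_inv_o)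
    show "(\<circ>) w0 ` {w. w permutes X \<and> w ` A = A} \<subseteq> {w. w permutes X \<and> w ` A = w0 ` A}"
    proof clarify
      fix w assume "w permutes X" "w ` A = A"
      then show "w0 \<circ> w permutes X \<and> (w0 \<circ> w) ` A = w0 ` A"
        using w0 by (metis image_comp permutes_compose)
    qed
    show "(\<circ>) (inv w0) ` {w. w permutes X \<and> w ` A = w0 ` A} \<subseteq> {w. w permutes X \<and> w ` A = A}"
    proof clarify
      fix w assume "w permutes X" "w ` A = w0 ` A"
      then show "inv w0 \<circ> w permutes X \<and> (inv w0 \<circ> w) ` A = A"
        using w0 inj by (metis image_comp image_inv_f_f permutes_compose permutes_inv)
    qed
  qed
  then show ?thesis by (rule bij_betw_same_card[symmetric])
qed

lemma sum_permutes_image: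
  assumes "finite X"
  shows "(\<Sum>w | w permutes X. g (w ` A))
    = of_nat (card {w. w permutes X \<and> w ` A = A}) * (\<Sum>D\<in>(\<lambda>w. w ` A) ` {w. w permutes X}. g D)"
proof -
  have "(\<Sum>w | w permutes X. g (w ` A))
      = (\<Sum>D\<in>(\<lambda>w. w ` A) ` {w. w permutes X}. \<Sum>w | w permutes X \<and> w ` A = D. g (w ` A))"
    using sum.image_gen[OF finite_permutations[OF assms], of "\<lambda>w. g (w ` A)" "\<lambda>w. w ` A"]
    by simp
  also have "\<dots> = (\<Sum>D\<in>(\<lambda>w. w ` A) ` {w. w permutes X}.
      of_nat (card {w. w permutes X \<and> w ` A = A}) * g D)"
  proof (rule sum.cong[OF refl])
    fix D assume "D \<in> (\<lambda>w. w ` A) ` {w. w permutes X}"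
    then obtain w0 where "w0 permutes X" "D = w0 ` A" by blast
    then have "(\<Sum>w | w permutes X \<and> w ` A = D. g (w ` A))
        = of_nat (card {w. w permutes X \<and> w ` A = D}) * g D"
      by simp
    then show "(\<Sum>w | w permutes X \<and> w ` A = D. g (w ` A))
        = of_nat (card {w. w permutes X \<and> w ` A = A}) * g D"
      using card_permutes_image_fiber[OF \<open>w0 permutes X\<close>, of A] \<open>D = w0 ` A\<close> by simp
  qed
  finally show ?thesis by (simp add: sum_distrib_left)
qed

lemma permutes_images_eq_exchanges:
  assumes "finite A" and "finite K0" and "A \<inter> K0 = {}"
  shows "(\<lambda>w. w ` A) ` {w. w permutes (A \<union> K0)}
    = (\<lambda>(K, B). (A - B) \<union> K) ` (SIGMA K:Pow K0. {B. B \<subseteq> A \<and> card B = card K})"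
proof (intro equalityI subsetI)
  fix D assume "D \<in> (\<lambda>w. w ` A) ` {w. w permutes (A \<union> K0)}"
  then obtain w where w: "w permutes (A \<union> K0)" and D: "D = w ` A" by blast
  have D_sub: "D \<subseteq> A \<union> K0" using D permutes_image[OF w] by blast
  have "card D = card A"
    unfolding D using permutes_inj_on[OF w] by (intro card_image) (blast intro: inj_on_subset)
  then have "card (A - D) = card (D - A)"
    using assms(1,2) D_sub finite_subset[OF D_sub]
    by (simp add: card_Diff_subset_Int Int_commute)
  moreover have "D = (A - (A - D)) \<union> (D \<inter> K0)" "D - A = D \<inter> K0"
    using D_sub assms(3) by auto
  ultimately show "D \<in> (\<lambda>(K, B). (A - B) \<union> K) ` (SIGMA K:Pow K0. {B. B \<subseteq> A \<and> card B = card K})"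
    by (intro image_eqI[of _ _ "(D \<inter> K0, A - D)"]) auto
next
  fix D assume "D \<in> (\<lambda>(K, B). (A - B) \<union> K) ` (SIGMA K:Pow K0. {B. B \<subseteq> A \<and> card B = card K})"
  then obtain K B where KB: "K \<subseteq> K0" "B \<subseteq> A" "card B = card K" and D: "D = (A - B) \<union> K"
    by auto
  obtain w where w: "w permutes (B \<union> K)" "w ` B = K"
    using permutes_exchange_exists[of B K] KB assms finite_subset by blast
  have "w ` A = w ` (A - B) \<union> w ` B"
    using image_Un[of w "A - B" B] KB(2) by (simp add: Un_absorb2)
  also have "w ` (A - B) = A - B"
  proof -
    have "w x = x" if "x \<in> A - B" for x
      using that KB assms(3) by (intro permutes_not_in[OF w(1)]) auto
    then show ?thesis by (metis image_cong image_ident)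
  qed
  finally have "w ` A = D" using D w(2) by simp
  moreover have "w permutes (A \<union> K0)" using w(1) KB by (auto elim: permutes_subset)
  ultimately show "D \<in> (\<lambda>w. w ` A) ` {w. w permutes (A \<union> K0)}" by blast
qed

lemma inj_on_exchanges:
  assumes "A \<inter> K0 = {}"
  shows "inj_on (\<lambda>(K, B). (A - B) \<union> K) (SIGMA K:Pow K0. {B. B \<subseteq> A \<and> card B = card K})"
proof (rule inj_onI, clarify)
  fix K B K' B'
  assume "K \<subseteq> K0" "B \<subseteq> A" "K' \<subseteq> K0" "B' \<subseteq> A" and eq: "A - B \<union> K = A - B' \<union> K'"
  moreover have "K = (A - B \<union> K) \<inter> K0" "K' = (A - B' \<union> K') \<inter> K0"
    "B = A - (A - B \<union> K)" "B' = A - (A - B' \<union> K')"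
    using calculation assms by blast+
  ultimately show "K = K' \<and> B = B'" by metis
qed

lemma sum_exchanges_eq_0:
  fixes g :: "'a set \<Rightarrow> 'b::{idom, ring_char_0}"
  assumes "finite A" and "finite K0" and "A \<inter> K0 = {}"
    and "(\<Sum>w | w permutes (A \<union> K0). g (w ` A)) = 0"
  shows "(\<Sum>K\<in>Pow K0. \<Sum>B | B \<subseteq> A \<and> card B = card K. g ((A - B) \<union> K)) = 0"
proof -
  let ?E = "SIGMA K:Pow K0. {B. B \<subseteq> A \<and> card B = card K}"
  have "card {w. w permutes (A \<union> K0) \<and> w ` A = A} \<noteq> 0"
    using assms(1,2) finite_permutations[of "A \<union> K0"] permutes_id
    by (subst card_0_eq) (auto intro!: exI[of _ id])
  with assms have "(\<Sum>D\<in>(\<lambda>w. w ` A) ` {w. w permutes (A \<union> K0)}. g D) = 0"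
    by (simp add: sum_permutes_image)
  also have "(\<Sum>D\<in>(\<lambda>w. w ` A) ` {w. w permutes (A \<union> K0)}. g D) = (\<Sum>(K, B)\<in>?E. g ((A - B) \<union> K))"
    using sum.reindex[OF inj_on_exchanges[OF assms(3)], of g]
    by (simp add: permutes_images_eq_exchanges assms case_prod_beta comp_def)
  also have "\<dots> = (\<Sum>K\<in>Pow K0. \<Sum>B | B \<subseteq> A \<and> card B = card K. g ((A - B) \<union> K))"
    using assms(1,2) by (subst sum.Sigma) (auto intro: finite_subset[of _ "Pow A"])
  finally show ?thesis by simp
qed

section \<open>The group algebra\<close>

lemma gmult_apply_eq_sum_pairs:
  "gmult n f g q = (\<Sum>x | x permutes {1..n}. \<Sum>y | y permutes {1..n}. if x \<circ> y = q then f x * g y else 0)"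
proof (cases "q permutes {1..n}")
  case True
  have "(\<Sum>y | y permutes {1..n}. if x \<circ> y = q then f x * g y else 0) = f x * g (inv x \<circ> q)"
    if x: "x permutes {1..n}" for x
  proof -
    have "x \<circ> y = q \<longleftrightarrow> y = inv x \<circ> q" for y
      using x by (auto simp: comp_assoc[symmetric] permutes_inv_o)
    moreover have "inv x \<circ> q permutes {1..n}" using x True by (intro permutes_compose permutes_inv)
    ultimately show ?thesis by (simp add: sum.delta' finite_permutations)
  qed
  with True show ?thesis by (simp add: gmult_def)
next
  case False
  then have "x \<circ> y \<noteq> q" if "x permutes {1..n}" "y permutes {1..n}" for x y
    using that permutes_compose by blast
  with False show ?thesis by (simp add: gmult_def)
qed

lemma gmult_gbasis_apply:
  assumes "s permutes {1..n}"
  shows "gmult n (gbasis n s) f q = (if q permutes {1..n} then f (inv s \<circ> q) else 0)"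
proof -
  have "(\<Sum>x | x permutes {1..n}. gbasis n s x * f (inv x \<circ> q))
      = (\<Sum>x | x permutes {1..n}. if x = s then f (inv x \<circ> q) else 0)"
    by (rule sum.cong) (auto simp: gbasis_def assms)
  also have "\<dots> = f (inv s \<circ> q)"
    using assms by (simp add: sum.delta' finite_permutations)
  finally show ?thesis by (simp add: gmult_def)
qed

lemma gmult_gbasis_signed_indicator_indicator:
  assumes s: "s permutes {1..n}"
    and C: "C \<subseteq> {p. p permutes {1..n}}" and R: "R \<subseteq> {p. p permutes {1..n}}"
  shows "gmult n (gmult n (gbasis n s) (\<lambda>p. if p \<in> C then of_int (sign p) else 0))
      (\<lambda>p. if p \<in> R then 1 else 0) q
    = (\<Sum>r\<in>R. \<Sum>z\<in>C. if s \<circ> z \<circ> r = q then of_int (sign z) else 0)"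
proof -
  let ?G = "{p. p permutes {1..n}}"
  let ?b = "\<lambda>p. if p \<in> C then of_int (sign p) else 0 :: complex"
  let ?h = "\<lambda>z r. if s \<circ> z \<circ> r = q then ?b z * (if r \<in> R then 1 else 0) else 0"
  let ?F = "\<lambda>x. \<Sum>r\<in>?G. if x \<circ> r = q then ?b (inv s \<circ> x) * (if r \<in> R then 1 else 0) else 0"
  have "gmult n (gmult n (gbasis n s) ?b) (\<lambda>p. if p \<in> R then 1 else 0) q = sum ?F ?G"
    unfolding gmult_apply_eq_sum_pairs[of n _ _ q]
    by (intro sum.cong refl) (simp add: gmult_gbasis_apply[OF s])
  also have "\<dots> = (\<Sum>z\<in>?G. ?F (s \<circ> z))"
    by (rule setum_permutations_compose_left[OF s])
  also have "\<dots> = (\<Sum>z\<in>?G. \<Sum>r\<in>?G. ?h z r)"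
  proof -
    have cancel: "inv s \<circ> (s \<circ> z) = z" for z
      using permutes_inv_o(2)[OF s] by (simp add: comp_assoc[symmetric])
    show ?thesis by (simp only: cancel)
  qed
  also have "\<dots> = (\<Sum>z\<in>C. \<Sum>r\<in>R. ?h z r)"
    using C R finite_permutations[of "{1..n}"]
    by (intro sum.mono_neutral_cong_right sum.mono_neutral_right) (auto intro!: sum.neutral)
  also have "\<dots> = (\<Sum>r\<in>R. \<Sum>z\<in>C. if s \<circ> z \<circ> r = q then of_int (sign z) else 0)"
    using C R by (subst sum.swap) (auto intro!: sum.cong)
  finally show ?thesis .
qed

section \<open>Numberings and the elements \<open>v\<^sub>S\<^sup>T\<close>\<close>

locale young_numbering =
  fixes n :: nat and lam :: "nat list" and S :: numbering
  assumes bij: "bij_betw S (cells lam) {1..n}"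
begin

definition cell_of :: "nat \<Rightarrow> nat \<times> nat" where
  "cell_of = the_inv_into (cells lam) S"

definition row_of :: "nat \<Rightarrow> nat" where
  "row_of k = fst (cell_of k)"

definition col_of :: "nat \<Rightarrow> nat" where
  "col_of k = snd (cell_of k)"

lemma inj_on_cells: "inj_on S (cells lam)"
  using bij by (rule bij_betw_imp_inj_on)

lemma cell_of_apply [simp]: "x \<in> cells lam \<Longrightarrow> cell_of (S x) = x"
  unfolding cell_of_def using inj_on_cells by (rule the_inv_into_f_f)

lemma apply_cell_of [simp]: "k \<in> {1..n} \<Longrightarrow> S (cell_of k) = k"
  unfolding cell_of_def using bij by (rule f_the_inv_into_f_bij_betw)

lemma cell_of_in_cells: "k \<in> {1..n} \<Longrightarrow> cell_of k \<in> cells lam"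
  unfolding cell_of_def using bij by (metis bij_betw_def the_inv_into_into order_refl)

lemma apply_in_range: "x \<in> cells lam \<Longrightarrow> S x \<in> {1..n}"
  using bij bij_betwE by blast

lemma bij_betw_cell_of: "bij_betw cell_of {1..n} (cells lam)"
  unfolding cell_of_def using bij by (rule bij_betw_the_inv_into)

lemma group_eq_fiber_preserving_perms:
  "{p. p permutes {1..n} \<and> (\<forall>x\<in>cells lam. \<exists>y\<in>cells lam. g y = g x \<and> S y = p (S x))}
   = fiber_preserving_perms {1..n} (\<lambda>k. g (cell_of k))"
proof (intro equalityI subsetI)
  fix p assume "p \<in> {p. p permutes {1..n} \<and> (\<forall>x\<in>cells lam. \<exists>y\<in>cells lam. g y = g x \<and> S y = p (S x))}"
  then have p: "p permutes {1..n}" and h: "\<forall>x\<in>cells lam. \<exists>y\<in>cells lam. g y = g x \<and> S y = p (S x)"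
    by auto
  have "g (cell_of (p k)) = g (cell_of k)" if k: "k \<in> {1..n}" for k
  proof -
    obtain y where "y \<in> cells lam" "g y = g (cell_of k)" "S y = p k"
      using h cell_of_in_cells[OF k] k by (metis apply_cell_of)
    then show ?thesis by (metis cell_of_apply)
  qed
  with p show "p \<in> fiber_preserving_perms {1..n} (\<lambda>k. g (cell_of k))"
    by (simp add: fiber_preserving_perms_def)
next
  fix p assume "p \<in> fiber_preserving_perms {1..n} (\<lambda>k. g (cell_of k))"
  then have p: "p permutes {1..n}" and h: "\<forall>k\<in>{1..n}. g (cell_of (p k)) = g (cell_of k)"
    by (auto simp: fiber_preserving_perms_def)
  have "\<exists>y\<in>cells lam. g y = g x \<and> S y = p (S x)" if x: "x \<in> cells lam" for x
  proof -
    have "p (S x) \<in> {1..n}" using permutes_in_image[OF p] apply_in_range[OF x] by blast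
    then show ?thesis
      using h apply_in_range[OF x] x cell_of_in_cells by (intro bexI[of _ "cell_of (p (S x))"]) auto
  qed
  with p show "p \<in> {p. p permutes {1..n} \<and> (\<forall>x\<in>cells lam. \<exists>y\<in>cells lam. g y = g x \<and> S y = p (S x))}"
    by blast
qed

lemma row_group_eq: "row_group n lam S = fiber_preserving_perms {1..n} row_of"
  unfolding row_group_def row_of_def using group_eq_fiber_preserving_perms[of fst] by simp

lemma col_group_eq: "col_group n lam S = fiber_preserving_perms {1..n} col_of"
  unfolding col_group_def col_of_def using group_eq_fiber_preserving_perms[of snd] by simp

lemma permutes_eqI_on_range:
  assumes "p permutes {1..n}" and "q permutes {1..n}" and "\<forall>x\<in>cells lam. p (S x) = q (S x)"
  shows "p = q"
proof
  fix k show "p k = q k"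
    using assms cell_of_in_cells[of k] apply_cell_of[of k] permutes_not_in[of _ "{1..n}" k]
    by (cases "k \<in> {1..n}") metis+
qed

lemma sigma_TS:
  assumes T: "bij_betw T (cells lam) {1..n}"
  shows "sigma_TS n lam S T permutes {1..n}" and "\<forall>x\<in>cells lam. sigma_TS n lam S T (S x) = T x"
proof -
  define p where "p = (\<lambda>k. if k \<in> {1..n} then T (cell_of k) else k)"
  have "bij_betw p {1..n} {1..n}"
    using bij_betw_trans[OF bij_betw_cell_of T] by (rule bij_betw_cong[THEN iffD1, rotated]) (simp add: p_def)
  then have p: "p permutes {1..n}" by (rule bij_imp_permutes) (auto simp: p_def)
  have pS: "\<forall>x\<in>cells lam. p (S x) = T x" using apply_in_range by (simp add: p_def)
  have "sigma_TS n lam S T = p"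
    unfolding sigma_TS_def using p pS permutes_eqI_on_range by (intro the_equality) auto
  with p pS show "sigma_TS n lam S T permutes {1..n}" "\<forall>x\<in>cells lam. sigma_TS n lam S T (S x) = T x"
    by simp_all
qed

lemma sigma_TS_unique:
  assumes "bij_betw T (cells lam) {1..n}" and "p permutes {1..n}" and "\<forall>x\<in>cells lam. p (S x) = T x"
  shows "sigma_TS n lam S T = p"
  using sigma_TS[OF assms(1)] assms(2,3) by (intro permutes_eqI_on_range) auto

lemma v_elt_eq_sum:
  assumes "bij_betw T (cells lam) {1..n}"
  shows "v_elt n lam S T q = (\<Sum>r\<in>row_group n lam S. \<Sum>z\<in>col_group n lam S.
      if sigma_TS n lam S T \<circ> z \<circ> r = q then of_int (sign z) else 0)"
  unfolding v_elt_def a_elt_def b_elt_def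
  by (rule gmult_gbasis_signed_indicator_indicator[OF sigma_TS(1)[OF assms]])
    (auto simp: row_group_def col_group_def)

lemma v_elt_compose_row_group:
  assumes T: "bij_betw T (cells lam) {1..n}" and k: "k \<in> row_group n lam S"
  shows "v_elt n lam S T (q \<circ> k) = v_elt n lam S T q"
proof -
  have k_perm: "k permutes {1..n}"
    using k by (simp add: row_group_eq fiber_preserving_perms_permutes)
  have "v_elt n lam S T (q \<circ> k) = (\<Sum>r\<in>row_group n lam S. \<Sum>z\<in>col_group n lam S.
      if sigma_TS n lam S T \<circ> z \<circ> (r \<circ> k) = q \<circ> k then of_int (sign z) else 0)"
    unfolding v_elt_eq_sum[OF T]
    by (rule sum_fiber_preserving_perms_compose_right[OF k[unfolded row_group_eq],
          folded row_group_eq])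
  also have "\<dots> = v_elt n lam S T q"
    unfolding v_elt_eq_sum[OF T]
    by (simp add: comp_assoc[symmetric] comp_permutes_cancel_right[OF k_perm])
  finally show ?thesis .
qed

lemma groups_relabel:
  assumes U: "bij_betw U (cells lam) {1..n}"
  defines "w \<equiv> sigma_TS n lam S U"
  shows "row_group n lam U = (\<lambda>g. w \<circ> g \<circ> inv w) ` row_group n lam S"
    and "col_group n lam U = (\<lambda>g. w \<circ> g \<circ> inv w) ` col_group n lam S"
proof -
  interpret U: young_numbering n lam U by (rule young_numbering.intro[OF U])
  have w: "w permutes {1..n}" and w_S: "\<forall>x\<in>cells lam. w (S x) = U x"
    using sigma_TS[OF U] by (simp_all add: w_def)
  have U_cell_of: "U.cell_of k = cell_of (inv w k)" if "k \<in> {1..n}" for k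
  proof -
    have k': "inv w k \<in> {1..n}" using that permutes_in_image[OF permutes_inv[OF w]] by blast
    have "U (cell_of (inv w k)) = w (S (cell_of (inv w k)))"
      using w_S cell_of_in_cells[OF k'] by simp
    also have "\<dots> = k" using k' permutes_inverses(1)[OF w] by simp
    finally have "U (cell_of (inv w k)) = k" .
    then show ?thesis using U.cell_of_apply[OF cell_of_in_cells[OF k']] by simp
  qed
  show "row_group n lam U = (\<lambda>g. w \<circ> g \<circ> inv w) ` row_group n lam S"
    unfolding row_group_eq U.row_group_eq U.row_of_def row_of_def
    by (rule fiber_preserving_perms_conjugate[OF w]) (simp add: U_cell_of)
  show "col_group n lam U = (\<lambda>g. w \<circ> g \<circ> inv w) ` col_group n lam S"
    unfolding col_group_eq U.col_group_eq U.col_of_def col_of_def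
    by (rule fiber_preserving_perms_conjugate[OF w]) (simp add: U_cell_of)
qed

lemma sigma_TS_relabel:
  assumes T: "bij_betw T (cells lam) {1..n}" and U: "bij_betw U (cells lam) {1..n}"
  shows "sigma_TS n lam U T = sigma_TS n lam S T \<circ> inv (sigma_TS n lam S U)"
proof -
  interpret U: young_numbering n lam U by (rule young_numbering.intro[OF U])
  define w where "w = sigma_TS n lam S U"
  define \<sigma> where "\<sigma> = sigma_TS n lam S T"
  have w: "w permutes {1..n}" and w_S: "\<forall>x\<in>cells lam. w (S x) = U x"
    using sigma_TS[OF U] by (simp_all add: w_def)
  have "sigma_TS n lam U T = \<sigma> \<circ> inv w"
  proof (rule U.sigma_TS_unique[OF T])
    show "\<sigma> \<circ> inv w permutes {1..n}"
      using sigma_TS(1)[OF T] w by (simp add: \<sigma>_def permutes_compose permutes_inv)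
    show "\<forall>x\<in>cells lam. (\<sigma> \<circ> inv w) (U x) = T x"
    proof
      fix x assume x: "x \<in> cells lam"
      have "(\<sigma> \<circ> inv w) (U x) = \<sigma> (inv w (w (S x)))" using w_S x by simp
      also have "\<dots> = T x" using sigma_TS(2)[OF T] x permutes_inverses(2)[OF w] by (simp add: \<sigma>_def)
      finally show "(\<sigma> \<circ> inv w) (U x) = T x" .
    qed
  qed
  then show ?thesis by (simp add: w_def \<sigma>_def)
qed

lemma v_elt_relabel:
  assumes T: "bij_betw T (cells lam) {1..n}" and U: "bij_betw U (cells lam) {1..n}"
  shows "v_elt n lam U T p = v_elt n lam S T (p \<circ> sigma_TS n lam S U)"
proof -
  define w where "w = sigma_TS n lam S U"
  define \<sigma> where "\<sigma> = sigma_TS n lam S T"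
  let ?conj = "\<lambda>g. w \<circ> g \<circ> inv w"
  have w: "w permutes {1..n}" using sigma_TS(1)[OF U] by (simp add: w_def)
  have inv_w_w: "inv w \<circ> (w \<circ> f) = f" for f :: "nat \<Rightarrow> nat"
    using permutes_inv_o(2)[OF w] by (simp add: comp_assoc[symmetric])
  have inj: "inj_on ?conj A" for A
    by (rule inj_onI) (metis inv_w_w comp_permutes_cancel_right[OF permutes_inv[OF w]] comp_assoc)
  have sign_conj: "sign (?conj z) = sign z" if "z \<in> col_group n lam S" for z
    using that w by (intro sign_conjugate)
      (auto simp: col_group_def intro: permutes_imp_permutation[of "{1..n}"])
  have shift: "\<sigma> \<circ> inv w \<circ> ?conj z \<circ> ?conj r = p \<longleftrightarrow> \<sigma> \<circ> z \<circ> r = p \<circ> w" for z r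
  proof -
    have "\<sigma> \<circ> inv w \<circ> ?conj z \<circ> ?conj r = (\<sigma> \<circ> z \<circ> r) \<circ> inv w"
      by (simp only: comp_assoc inv_w_w)
    then show ?thesis by (simp only: comp_inv_eq_iff[OF w])
  qed
  have "v_elt n lam U T p = (\<Sum>r\<in>?conj ` row_group n lam S. \<Sum>z\<in>?conj ` col_group n lam S.
      if \<sigma> \<circ> inv w \<circ> z \<circ> r = p then of_int (sign z) else 0)"
    by (simp only: young_numbering.v_elt_eq_sum[OF young_numbering.intro[OF U] T]
        sigma_TS_relabel[OF T U] groups_relabel[OF U] w_def \<sigma>_def)
  also have "\<dots> = (\<Sum>r\<in>row_group n lam S. \<Sum>z\<in>col_group n lam S.
      if \<sigma> \<circ> inv w \<circ> ?conj z \<circ> ?conj r = p then of_int (sign (?conj z)) else 0)"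
    by (intro sum.reindex_cong[OF inj refl]) (rule refl)
  also have "\<dots> = (\<Sum>r\<in>row_group n lam S. \<Sum>z\<in>col_group n lam S.
      if \<sigma> \<circ> z \<circ> r = p \<circ> w then of_int (sign z) else 0)"
    by (intro sum.cong refl) (simp only: shift sign_conj)
  also have "\<dots> = v_elt n lam S T (p \<circ> sigma_TS n lam S U)"
    by (simp only: v_elt_eq_sum[OF T] \<sigma>_def w_def)
  finally show ?thesis .
qed

lemma sum_col_group_permutes_eq_0:
  fixes s p :: "nat \<Rightarrow> nat"
  assumes P: "P \<subseteq> {1..n}" and r: "r \<in> row_group n lam S"
    and xy: "x \<in> P" "y \<in> P" "x \<noteq> y" and col: "col_of (r x) = col_of (r y)"
  shows "(\<Sum>z\<in>col_group n lam S. \<Sum>w | w permutes P.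
      if s \<circ> z \<circ> r = p \<circ> w then of_int (sign z) else 0 :: complex) = 0"
proof -
  let ?P = "{w. w permutes P}" and ?C = "col_group n lam S"
  define f where "f z w = (if s \<circ> z \<circ> r = p \<circ> w then of_int (sign z) else 0 :: complex)"
    for z w :: "nat \<Rightarrow> nat"
  have r_perm: "r permutes {1..n}" using r by (simp add: row_group_def)
  have rxy: "r x \<in> {1..n}" "r y \<in> {1..n}" "r x \<noteq> r y"
    using xy P permutes_in_image[OF r_perm] permutes_inj[OF r_perm] by (auto dest: injD)
  define t where "t = transpose x y"
  define t' where "t' = transpose (r x) (r y)"
  have t: "t permutes P" unfolding t_def using xy by (intro permutes_swap_id)
  have t': "t' \<in> ?C" unfolding t'_def col_group_eq using rxy col
    by (intro transpose_in_fiber_preserving_perms) auto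
  have t'_r: "t' \<circ> r = r \<circ> t"
    unfolding t'_def t_def using transpose_comp_eq[of r "r x" "r y"] permutes_bij[OF r_perm]
    by (simp add: permutes_inverses(2)[OF r_perm])
  have sign_t': "sign t' = -1" unfolding t'_def using rxy by (simp add: sign_swap_id)
  have flip: "f (z \<circ> t') (w \<circ> t) = - f z w" if z: "z \<in> ?C" for z w
  proof -
    have "s \<circ> (z \<circ> t') \<circ> r = p \<circ> (w \<circ> t) \<longleftrightarrow> s \<circ> z \<circ> r = p \<circ> w"
      using t'_r comp_permutes_cancel_right[OF t, of "s \<circ> z \<circ> r" "p \<circ> w"]
      by (simp add: comp_assoc)
    moreover have "sign (z \<circ> t') = - sign z"
      using z t' sign_t' by (simp add: sign_compose col_group_def permutes_imp_permutation[of "{1..n}"])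
    ultimately show ?thesis by (simp add: f_def)
  qed
  have "(\<Sum>z\<in>?C. \<Sum>w\<in>?P. f z w) = (\<Sum>z\<in>?C. \<Sum>w\<in>?P. f (z \<circ> t') w)"
    by (rule sum_fiber_preserving_perms_compose_right[OF t'[unfolded col_group_eq], folded col_group_eq])
  also have "\<dots> = (\<Sum>z\<in>?C. \<Sum>w\<in>?P. f (z \<circ> t') (w \<circ> t))"
    by (rule sum.cong[OF refl], rule sum_permutations_compose_right[OF t])
  also have "\<dots> = - (\<Sum>z\<in>?C. \<Sum>w\<in>?P. f z w)" by (simp add: flip sum_negf)
  finally show ?thesis by (simp add: f_def)
qed

lemma sum_permutes_v_elt_eq_0:
  assumes T: "bij_betw T (cells lam) {1..n}" and P: "P \<subseteq> {1..n}"
    and collision: "\<And>r. r \<in> row_group n lam S \<Longrightarrow> \<exists>x\<in>P. \<exists>y\<in>P. x \<noteq> y \<and> col_of (r x) = col_of (r y)"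
  shows "(\<Sum>w | w permutes P. v_elt n lam S T (p \<circ> w)) = 0"
proof -
  have "(\<Sum>w | w permutes P. v_elt n lam S T (p \<circ> w))
      = (\<Sum>r\<in>row_group n lam S. \<Sum>z\<in>col_group n lam S. \<Sum>w | w permutes P.
          if sigma_TS n lam S T \<circ> z \<circ> r = p \<circ> w then of_int (sign z) else 0)"
    unfolding v_elt_eq_sum[OF T] by (simp only: sum.swap[of _ "{w. w permutes P}"])
  also have "\<dots> = 0"
  proof (rule sum.neutral, rule ballI)
    fix r assume r: "r \<in> row_group n lam S"
    then obtain x y where "x \<in> P" "y \<in> P" "x \<noteq> y" "col_of (r x) = col_of (r y)"
      using collision by blast
    then show "(\<Sum>z\<in>col_group n lam S. \<Sum>w | w permutes P.
        if sigma_TS n lam S T \<circ> z \<circ> r = p \<circ> w then of_int (sign z) else 0 :: complex) = 0"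
      by (rule sum_col_group_permutes_eq_0[OF P r])
  qed
  finally show ?thesis .
qed

end

section \<open>Garnir relations\<close>

locale garnir_setting = young_numbering +
  fixes T :: numbering and i j :: nat
  assumes T: "bij_betw T (cells lam) {1..n}"
    and partition: "is_partition lam n"
    and i: "1 \<le> i" "i < length lam"
    and j: "1 \<le> j" "j \<le> lam ! i"
begin

definition upper_row :: "nat set" where
  "upper_row = {k \<in> {1..n}. row_of k = i}"

definition lower_block :: "nat set" where
  "lower_block = S ` ({Suc i} \<times> {1..j})"

lemma row_length_antimono: "lam ! i \<le> lam ! (i - 1)"
  using partition i unfolding is_partition_def by (intro sorted_rev_nth_mono) auto

lemma upper_row_cells_subset: "{i} \<times> {1..lam ! (i - 1)} \<subseteq> cells lam"
  using i by (auto simp: cells_def)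

lemma lower_block_cells_subset: "{Suc i} \<times> {1..j} \<subseteq> cells lam"
  using i j by (auto simp: cells_def)

lemma upper_row_eq: "upper_row = S ` ({i} \<times> {1..lam ! (i - 1)})"
proof (intro equalityI subsetI)
  fix k assume "k \<in> upper_row"
  then have k: "k \<in> {1..n}" "fst (cell_of k) = i" by (auto simp: upper_row_def row_of_def)
  then have "cell_of k \<in> {i} \<times> {1..lam ! (i - 1)}"
    using cell_of_in_cells[OF k(1)] by (auto simp: cells_def)
  then show "k \<in> S ` ({i} \<times> {1..lam ! (i - 1)})" using apply_cell_of[OF k(1)] by force
next
  fix k assume "k \<in> S ` ({i} \<times> {1..lam ! (i - 1)})"
  then obtain x where x: "x \<in> {i} \<times> {1..lam ! (i - 1)}" and k: "k = S x" by blast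
  then show "k \<in> upper_row"
    using upper_row_cells_subset apply_in_range by (auto simp: upper_row_def row_of_def)
qed

lemma lower_block_row:
  assumes "k \<in> lower_block"
  shows "k \<in> {1..n}" and "row_of k = Suc i"
proof -
  obtain x where x: "x \<in> {Suc i} \<times> {1..j}" "k = S x"
    using assms by (auto simp: lower_block_def)
  then have "x \<in> cells lam" using lower_block_cells_subset by blast
  then show "k \<in> {1..n}" "row_of k = Suc i"
    using x apply_in_range by (auto simp: row_of_def)
qed

lemma upper_row_lower_block_disjoint: "upper_row \<inter> lower_block = {}"
proof -
  have "k \<notin> upper_row" if "k \<in> lower_block" for k
    using lower_block_row(2)[OF that] by (simp add: upper_row_def)
  then show ?thesis by blast
qed

lemma finite_upper_row: "finite upper_row"
  unfolding upper_row_def by (rule finite_subset[of _ "{1..n}"]) auto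

lemma finite_lower_block: "finite lower_block"
  unfolding lower_block_def by (intro finite_imageI finite_cartesian_product) simp_all

lemma card_lower_block: "card lower_block = j"
proof -
  have "card lower_block = card ({Suc i} \<times> {1..j})"
    unfolding lower_block_def
    by (rule card_image[OF inj_on_subset[OF inj_on_cells lower_block_cells_subset]])
  then show ?thesis by (simp add: card_cartesian_product)
qed

lemma row_group_column_collision:
  assumes r: "r \<in> row_group n lam S" and y: "y \<in> lower_block"
  shows "\<exists>x\<in>upper_row. col_of (r x) = col_of (r y)"
proof -
  have r_perm: "r permutes {1..n}" and r_row: "\<forall>k\<in>{1..n}. row_of (r k) = row_of k"
    using r by (auto simp: row_group_eq fiber_preserving_perms_def)
  have y': "y \<in> {1..n}" "row_of y = Suc i" using lower_block_row[OF y] by auto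
  have ry: "r y \<in> {1..n}" using permutes_in_image[OF r_perm] y'(1) by blast
  obtain c where c: "cell_of (r y) = (Suc i, c)"
    using r_row y' ry by (metis prod.collapse row_of_def)
  have "(Suc i, c) \<in> cells lam" using cell_of_in_cells[OF ry] c by simp
  then have "(i, c) \<in> cells lam" using row_length_antimono i by (auto simp: cells_def)
  define x where "x = inv r (S (i, c))"
  have Sic: "S (i, c) \<in> {1..n}" using apply_in_range[OF \<open>(i, c) \<in> cells lam\<close>] .
  have rx: "r x = S (i, c)" using permutes_inverses(1)[OF r_perm] by (simp add: x_def)
  have x_range: "x \<in> {1..n}"
    using permutes_in_image[OF permutes_inv[OF r_perm]] Sic by (simp add: x_def)
  have "row_of x = i"
    using r_row x_range rx \<open>(i, c) \<in> cells lam\<close> by (metis cell_of_apply fst_conv row_of_def)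
  with x_range have "x \<in> upper_row" by (simp add: upper_row_def)
  moreover have "col_of (r x) = col_of (r y)"
    using rx c \<open>(i, c) \<in> cells lam\<close> by (simp add: col_of_def)
  ultimately show ?thesis by blast
qed

lemma sum_permutes_upper_row_Un_eq_0:
  assumes "J' \<subseteq> lower_block" and "J' \<noteq> {}"
  shows "(\<Sum>w | w permutes (upper_row \<union> J'). v_elt n lam S T (p \<circ> w)) = 0"
proof (rule sum_permutes_v_elt_eq_0[OF T])
  show "upper_row \<union> J' \<subseteq> {1..n}"
    using assms(1) lower_block_row by (auto simp: upper_row_def)
  fix r assume r: "r \<in> row_group n lam S"
  obtain y where y: "y \<in> J'" using assms(2) by blast
  then obtain x where x: "x \<in> upper_row" "col_of (r x) = col_of (r y)"
    using row_group_column_collision[OF r] assms(1) by blast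
  moreover have "x \<noteq> y" using x(1) y assms(1) upper_row_lower_block_disjoint by blast
  ultimately show "\<exists>x\<in>upper_row \<union> J'. \<exists>y\<in>upper_row \<union> J'. x \<noteq> y \<and> col_of (r x) = col_of (r y)"
    using y by blast
qed

lemma v_elt_compose_eq_if_image_eq:
  assumes t1: "t1 permutes (upper_row \<union> lower_block)" and t2: "t2 permutes (upper_row \<union> lower_block)"
    and image_eq: "t1 ` upper_row = t2 ` upper_row"
  shows "v_elt n lam S T (p \<circ> t1) = v_elt n lam S T (p \<circ> t2)"
proof -
  define k where "k = inv t1 \<circ> t2"
  have k: "k permutes (upper_row \<union> lower_block)"
    unfolding k_def using t1 t2 by (intro permutes_compose permutes_inv)
  have X_range: "upper_row \<union> lower_block \<subseteq> {1..n}"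
    using lower_block_row(1) by (auto simp: upper_row_def)
  have t2_eq: "t2 = t1 \<circ> k"
    unfolding k_def using permutes_inv_o(1)[OF t1] by (simp add: comp_assoc[symmetric])
  have k_upper: "k ` upper_row = upper_row"
    unfolding k_def image_comp[symmetric] image_eq[symmetric]
    by (rule image_inv_f_f[OF permutes_inj[OF t1]])
  have "row_of (k m) = row_of m" if "m \<in> {1..n}" for m
  proof (cases "m \<in> upper_row \<union> lower_block")
    case False
    then show ?thesis using k by (simp add: permutes_not_in)
  next
    case True
    have km: "k m \<in> upper_row \<union> lower_block" using True permutes_in_image[OF k] by blast
    have "m \<in> upper_row \<longleftrightarrow> k m \<in> upper_row"
      using k_upper permutes_inj[OF k] by (metis inj_image_mem_iff)
    with True km consider "m \<in> upper_row" "k m \<in> upper_row" | "m \<in> lower_block" "k m \<in> lower_block"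
      by blast
    then show ?thesis
      by cases (simp_all add: upper_row_def lower_block_row(2))
  qed
  then have "k \<in> row_group n lam S"
    using permutes_subset[OF k X_range] by (simp add: row_group_eq fiber_preserving_perms_def)
  then show ?thesis
    using v_elt_compose_row_group[OF T, of k "p \<circ> t1"] by (simp add: t2_eq comp_assoc)
qed

text \<open>The choice of \<open>t\<close> is irrelevant by \<open>v_elt_compose_eq_if_image_eq\<close>.\<close>

definition coset_value :: "(nat \<Rightarrow> nat) \<Rightarrow> nat set \<Rightarrow> complex" where
  "coset_value p D = v_elt n lam S T
     (p \<circ> (SOME t. t permutes (upper_row \<union> lower_block) \<and> t ` upper_row = D))"

lemma v_elt_compose_eq_coset_value:
  assumes "t permutes (upper_row \<union> lower_block)"
  shows "v_elt n lam S T (p \<circ> t) = coset_value p (t ` upper_row)"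
proof -
  define t' where "t' = (SOME t'. t' permutes (upper_row \<union> lower_block) \<and> t' ` upper_row = t ` upper_row)"
  have "\<exists>t'. t' permutes (upper_row \<union> lower_block) \<and> t' ` upper_row = t ` upper_row"
    using assms by blast
  then have "t' permutes (upper_row \<union> lower_block) \<and> t' ` upper_row = t ` upper_row"
    unfolding t'_def by (rule someI_ex)
  then have t': "t' permutes (upper_row \<union> lower_block)" "t' ` upper_row = t ` upper_row"
    by simp_all
  have "v_elt n lam S T (p \<circ> t) = v_elt n lam S T (p \<circ> t')"
    by (rule v_elt_compose_eq_if_image_eq[OF assms t'(1) t'(2)[symmetric]])
  then show ?thesis by (simp add: coset_value_def t'_def)
qed

definition exchange_sum :: "(nat \<Rightarrow> nat) \<Rightarrow> nat set \<Rightarrow> complex" where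
  "exchange_sum p K = (\<Sum>B | B \<subseteq> upper_row \<and> card B = card K. coset_value p ((upper_row - B) \<union> K))"

lemma sum_Pow_exchange_sum_eq_0:
  assumes J': "J' \<subseteq> lower_block" "J' \<noteq> {}"
  shows "sum (exchange_sum p) (Pow J') = 0"
proof -
  have disjoint: "upper_row \<inter> J' = {}" using J'(1) upper_row_lower_block_disjoint by blast
  have sub: "upper_row \<union> J' \<subseteq> upper_row \<union> lower_block" using J'(1) by blast
  have "(\<Sum>w | w permutes (upper_row \<union> J'). coset_value p (w ` upper_row))
      = (\<Sum>w | w permutes (upper_row \<union> J'). v_elt n lam S T (p \<circ> w))"
  proof (rule sum.cong[OF refl])
    fix w assume "w \<in> {w. w permutes (upper_row \<union> J')}"
    then have "w permutes (upper_row \<union> lower_block)" using permutes_subset[OF _ sub] by blast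
    then show "coset_value p (w ` upper_row) = v_elt n lam S T (p \<circ> w)"
      by (rule v_elt_compose_eq_coset_value[symmetric])
  qed
  also have "\<dots> = 0" using sum_permutes_upper_row_Un_eq_0[OF J'] .
  finally show ?thesis
    unfolding exchange_sum_def
    by (rule sum_exchanges_eq_0[where g = "coset_value p", OF finite_upper_row
          finite_subset[OF J'(1) finite_lower_block] disjoint])
qed

lemma exchange_sum_empty: "exchange_sum p {} = v_elt n lam S T p"
proof -
  have "card B = 0 \<longleftrightarrow> B = {}" if "B \<subseteq> upper_row" for B
    using finite_subset[OF that finite_upper_row] by simp
  then have "{B. B \<subseteq> upper_row \<and> card B = card ({} :: nat set)} = {{}}"
    by auto
  then have "exchange_sum p {} = coset_value p (id ` upper_row)"
    unfolding exchange_sum_def by simp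
  also have "\<dots> = v_elt n lam S T (p \<circ> id)"
    by (rule v_elt_compose_eq_coset_value[symmetric]) (rule permutes_id)
  finally show ?thesis by simp
qed

lemma v_elt_eq_exchange_sum: "v_elt n lam S T p = (-1) ^ j * exchange_sum p lower_block"
proof -
  have "exchange_sum p lower_block = (-1) ^ j * v_elt n lam S T p"
    using sum_Pow_vanishing_imp_alternating[OF finite_lower_block, of "exchange_sum p"]
      sum_Pow_exchange_sum_eq_0 card_lower_block exchange_sum_empty by simp
  moreover have "(-1 :: complex) ^ j * (-1) ^ j = 1"
    by (simp flip: power_mult_distrib)
  ultimately show ?thesis
    by (simp add: mult.assoc[symmetric])
qed

definition column_choices :: "nat set set" where
  "column_choices = {C. C \<subseteq> {1..lam ! (i - 1)} \<and> card C = j}"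

definition exchange_cells :: "nat set \<Rightarrow> nat \<times> nat \<Rightarrow> nat \<times> nat" where
  "exchange_cells C = (\<lambda>(r, c).
     if r = i \<and> c \<in> C then (Suc i, set_rank C c)
     else if r = Suc i \<and> 1 \<le> c \<and> c \<le> j then (i, set_nth C c)
     else (r, c))"

lemma exchange_cells_upper [simp]: "c \<in> C \<Longrightarrow> exchange_cells C (i, c) = (Suc i, set_rank C c)"
  by (simp add: exchange_cells_def)

lemma exchange_cells_lower [simp]: "c \<in> {1..j} \<Longrightarrow> exchange_cells C (Suc i, c) = (i, set_nth C c)"
  by (simp add: exchange_cells_def)

lemma exchange_cells_fixes:
  assumes "x \<notin> {i} \<times> C" and "x \<notin> {Suc i} \<times> {1..j}"
  shows "exchange_cells C x = x"
  using assms by (cases x) (simp add: exchange_cells_def)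

lemma swap_numbering_eq: "swap_numbering i j C S = S \<circ> exchange_cells C"
proof
  fix x :: "nat \<times> nat"
  obtain r c where "x = (r, c)" by (cases x)
  then show "swap_numbering i j C S x = (S \<circ> exchange_cells C) x"
    unfolding swap_numbering_def exchange_cells_def set_rank_def set_nth_def Suc_eq_plus1 by simp
qed

lemma Xi_eq: "Xi lam i j S = (\<lambda>C. swap_numbering i j C S) ` column_choices"
  by (simp add: Xi_def column_choices_def)

context
  fixes C assumes C: "C \<in> column_choices"
begin

lemma choice_subset: "C \<subseteq> {1..lam ! (i - 1)}"
  using C by (simp add: column_choices_def)

lemma finite_choice: "finite C"
  using choice_subset by (rule finite_subset) simp

lemma card_choice: "card C = j"
  using C by (simp add: column_choices_def)

lemma exchange_cells_involutive: "exchange_cells C (exchange_cells C x) = x"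
proof -
  consider "x \<in> {i} \<times> C" | "x \<in> {Suc i} \<times> {1..j}" | "x \<notin> {i} \<times> C" "x \<notin> {Suc i} \<times> {1..j}"
    by blast
  then show ?thesis
  proof cases
    case 1
    then obtain c where "x = (i, c)" "c \<in> C" by blast
    then show ?thesis
      using set_rank_in[OF finite_choice] set_nth_set_rank[OF finite_choice] card_choice by simp
  next
    case 2
    then obtain c where "x = (Suc i, c)" "c \<in> {1..j}" by blast
    then show ?thesis
      using set_nth_in[OF finite_choice] set_rank_set_nth[OF finite_choice] card_choice by simp
  next
    case 3
    then show ?thesis by (simp add: exchange_cells_fixes)
  qed
qed

lemma exchange_cells_in_upper_row_iff:
  "exchange_cells C y \<in> {i} \<times> {1..lam ! (i - 1)}
    \<longleftrightarrow> y \<in> ({i} \<times> ({1..lam ! (i - 1)} - C)) \<union> ({Suc i} \<times> {1..j})"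
proof -
  consider "y \<in> {i} \<times> C" | "y \<in> {Suc i} \<times> {1..j}" | "y \<notin> {i} \<times> C" "y \<notin> {Suc i} \<times> {1..j}"
    by blast
  then show ?thesis
  proof cases
    case 1
    then show ?thesis by auto
  next
    case 2
    then obtain c where "y = (Suc i, c)" "c \<in> {1..j}" by blast
    then show ?thesis
      using set_nth_in[OF finite_choice, of c] card_choice choice_subset by auto
  next
    case 3
    then show ?thesis by (auto simp: exchange_cells_fixes)
  qed
qed

lemma exchange_cells_image_upper_row:
  "exchange_cells C ` ({i} \<times> {1..lam ! (i - 1)})
    = ({i} \<times> ({1..lam ! (i - 1)} - C)) \<union> ({Suc i} \<times> {1..j})"
proof (intro equalityI subsetI)
  fix y assume "y \<in> exchange_cells C ` ({i} \<times> {1..lam ! (i - 1)})"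
  then obtain x where "x \<in> {i} \<times> {1..lam ! (i - 1)}" "y = exchange_cells C x" by blast
  then show "y \<in> ({i} \<times> ({1..lam ! (i - 1)} - C)) \<union> ({Suc i} \<times> {1..j})"
    using exchange_cells_in_upper_row_iff[of y] exchange_cells_involutive[of x] by simp
next
  fix y assume "y \<in> ({i} \<times> ({1..lam ! (i - 1)} - C)) \<union> ({Suc i} \<times> {1..j})"
  then have "exchange_cells C y \<in> {i} \<times> {1..lam ! (i - 1)}"
    using exchange_cells_in_upper_row_iff by blast
  then show "y \<in> exchange_cells C ` ({i} \<times> {1..lam ! (i - 1)})"
    using exchange_cells_involutive[of y] by (metis image_eqI)
qed

lemma exchange_cells_in_cells:
  assumes x: "x \<in> cells lam"
  shows "exchange_cells C x \<in> cells lam"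
proof -
  consider "x \<in> {i} \<times> C" | "x \<in> {Suc i} \<times> {1..j}" | "x \<notin> {i} \<times> C" "x \<notin> {Suc i} \<times> {1..j}"
    by blast
  then show ?thesis
  proof cases
    case 1
    then obtain c where c: "x = (i, c)" "c \<in> C" by blast
    have "exchange_cells C x = (Suc i, set_rank C c)" using c by simp
    moreover have "set_rank C c \<in> {1..j}"
      using set_rank_in[OF finite_choice c(2)] card_choice by simp
    ultimately show ?thesis using lower_block_cells_subset by auto
  next
    case 2
    then obtain c where c: "x = (Suc i, c)" "c \<in> {1..j}" by blast
    have "exchange_cells C x = (i, set_nth C c)" using c by simp
    moreover have "set_nth C c \<in> {1..lam ! (i - 1)}"
      using set_nth_in[OF finite_choice, of c] c(2) card_choice choice_subset by auto
    ultimately show ?thesis using upper_row_cells_subset by auto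
  next
    case 3
    then show ?thesis using x by (simp add: exchange_cells_fixes)
  qed
qed

lemma bij_betw_exchange_cells: "bij_betw (exchange_cells C) (cells lam) (cells lam)"
  using exchange_cells_involutive exchange_cells_in_cells
  by (intro bij_betw_byWitness[where f' = "exchange_cells C"]) auto

lemma bij_betw_swap_numbering: "bij_betw (swap_numbering i j C S) (cells lam) {1..n}"
  unfolding swap_numbering_eq by (rule bij_betw_trans[OF bij_betw_exchange_cells bij])

lemma sigma_swap_numbering:
  defines "\<sigma> \<equiv> sigma_TS n lam S (swap_numbering i j C S)"
  shows "\<sigma> permutes (upper_row \<union> lower_block)"
    and "\<sigma> ` upper_row = (upper_row - (\<lambda>c. S (i, c)) ` C) \<union> lower_block"
proof -
  have \<sigma>_S: "\<sigma> (S x) = S (exchange_cells C x)" if "x \<in> cells lam" for x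
    using sigma_TS(2)[OF bij_betw_swap_numbering] that by (simp add: \<sigma>_def swap_numbering_eq)
  show "\<sigma> permutes (upper_row \<union> lower_block)"
  proof (rule permutes_superset[OF sigma_TS(1)[OF bij_betw_swap_numbering, folded \<sigma>_def]])
    fix k assume k: "k \<in> {1..n} - (upper_row \<union> lower_block)"
    define x where "x = cell_of k"
    have x: "x \<in> cells lam" "S x = k" using k cell_of_in_cells by (auto simp: x_def)
    have "x \<notin> {i} \<times> C"
      using k x choice_subset by (auto simp: upper_row_eq)
    moreover have "x \<notin> {Suc i} \<times> {1..j}"
      using k x by (auto simp: lower_block_def)
    ultimately show "\<sigma> k = k"
      using \<sigma>_S[OF x(1)] x(2) exchange_cells_fixes by simp
  qed
  have S_diff: "S ` ({i} \<times> {1..lam ! (i - 1)}) - S ` ({i} \<times> C) = S ` ({i} \<times> ({1..lam ! (i - 1)} - C))"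
    unfolding Sigma_Diff_distrib2
    by (rule inj_on_image_set_diff[OF inj_on_cells, symmetric]) (use choice_subset upper_row_cells_subset in blast)+
  have "\<sigma> ` upper_row = S ` exchange_cells C ` ({i} \<times> {1..lam ! (i - 1)})"
    unfolding upper_row_eq image_comp
    using \<sigma>_S upper_row_cells_subset by (intro image_cong refl) auto
  also have "\<dots> = S ` ({i} \<times> ({1..lam ! (i - 1)} - C)) \<union> lower_block"
    unfolding exchange_cells_image_upper_row image_Un lower_block_def ..
  also have "\<dots> = (upper_row - (\<lambda>c. S (i, c)) ` C) \<union> lower_block"
  proof -
    have "(\<lambda>c. S (i, c)) ` C = S ` ({i} \<times> C)" by auto
    then show ?thesis using S_diff by (simp only: upper_row_eq)
  qed
  finally show "\<sigma> ` upper_row = (upper_row - (\<lambda>c. S (i, c)) ` C) \<union> lower_block" .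
qed

lemma v_elt_swap_numbering:
  "v_elt n lam (swap_numbering i j C S) T p
    = coset_value p ((upper_row - (\<lambda>c. S (i, c)) ` C) \<union> lower_block)"
  using v_elt_relabel[OF T bij_betw_swap_numbering] sigma_swap_numbering
    v_elt_compose_eq_coset_value by simp

end

lemma bij_betw_upper_row_entries: "bij_betw (\<lambda>c. S (i, c)) {1..lam ! (i - 1)} upper_row"
proof (rule bij_betw_imageI)
  show "inj_on (\<lambda>c. S (i, c)) {1..lam ! (i - 1)}"
  proof (rule inj_onI)
    fix c c' assume c: "c \<in> {1..lam ! (i - 1)}" "c' \<in> {1..lam ! (i - 1)}" and eq: "S (i, c) = S (i, c')"
    have "(i, c) \<in> cells lam" "(i, c') \<in> cells lam"
      using c by (auto intro: subsetD[OF upper_row_cells_subset])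
    with eq have "(i, c) = (i, c')" by (rule inj_onD[OF inj_on_cells])
    then show "c = c'" by simp
  qed
  show "(\<lambda>c. S (i, c)) ` {1..lam ! (i - 1)} = upper_row"
    unfolding upper_row_eq by auto
qed

text \<open>A swapped numbering determines \<open>C\<close> through the entries that it moves out of row \<open>i\<close>.\<close>

lemma inj_on_swap_numbering: "inj_on (\<lambda>C. swap_numbering i j C S) column_choices"
proof (rule inj_on_imageI2[of "\<lambda>U. upper_row - sigma_TS n lam S U ` upper_row"])
  have inj: "inj_on (image (\<lambda>c. S (i, c))) column_choices"
    unfolding column_choices_def
    using bij_betw_image_subsets_of_card[OF bij_betw_upper_row_entries] by (rule bij_betw_imp_inj_on)
  have "upper_row - sigma_TS n lam S (swap_numbering i j C S) ` upper_row = (\<lambda>c. S (i, c)) ` C"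
    if C: "C \<in> column_choices" for C
  proof -
    have "(\<lambda>c. S (i, c)) ` C \<subseteq> upper_row"
      using image_mono[OF choice_subset[OF C], of "\<lambda>c. S (i, c)"]
        bij_betw_imp_surj_on[OF bij_betw_upper_row_entries] by simp
    then show ?thesis
      using sigma_swap_numbering(2)[OF C] upper_row_lower_block_disjoint by blast
  qed
  then have "((\<lambda>U. upper_row - sigma_TS n lam S U ` upper_row) \<circ> (\<lambda>C. swap_numbering i j C S)) C
      = image (\<lambda>c. S (i, c)) C" if "C \<in> column_choices" for C
    using that by simp
  then show "inj_on ((\<lambda>U. upper_row - sigma_TS n lam S U ` upper_row) \<circ> (\<lambda>C. swap_numbering i j C S))
      column_choices"
    by (rule inj_on_cong[THEN iffD2, OF _ inj])
qed

lemma sum_Xi_v_elt_eq_exchange_sum: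
  "(\<Sum>U\<in>Xi lam i j S. v_elt n lam U T p) = exchange_sum p lower_block"
proof -
  have "(\<Sum>U\<in>Xi lam i j S. v_elt n lam U T p)
      = (\<Sum>C\<in>column_choices. coset_value p ((upper_row - (\<lambda>c. S (i, c)) ` C) \<union> lower_block))"
    unfolding Xi_eq sum.reindex[OF inj_on_swap_numbering] comp_def
    by (intro sum.cong refl v_elt_swap_numbering)
  also have "\<dots> = (\<Sum>B | B \<subseteq> upper_row \<and> card B = card lower_block.
      coset_value p ((upper_row - B) \<union> lower_block))"
    using bij_betw_image_subsets_of_card[OF bij_betw_upper_row_entries, of j]
    unfolding column_choices_def card_lower_block
    by (rule sum.reindex_bij_betw)
  finally show ?thesis by (simp only: exchange_sum_def)
qed

end

theorem corollary2p16:
  fixes n :: nat and lam :: "nat list" and S T :: numbering and i j :: nat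
  assumes "is_partition lam n"
    and "is_numbering n lam S" and "is_numbering n lam T"
    and "1 \<le> i" and "i \<le> length lam - 1"
    and "1 \<le> j" and "j \<le> lam ! i"
  shows "v_elt n lam S T = (\<lambda>p. (-1) ^ j * (\<Sum>U\<in>Xi lam i j S. v_elt n lam U T p))"
proof
  fix p
  interpret garnir_setting n lam S T i j
    using assms by unfold_locales (auto simp: is_numbering_def)
  show "v_elt n lam S T p = (-1) ^ j * (\<Sum>U\<in>Xi lam i j S. v_elt n lam U T p)"
    by (simp only: v_elt_eq_exchange_sum sum_Xi_v_elt_eq_exchange_sum)
qed

end
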